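(* Let $b\mid M$ with $b<M$, and let $C$ be the array code over $\mathbb{F}_q$ whose columns are associated with the elements of a $b$-spread of $\mathbb{F}_q^M$, each exactly once. Then $C$ has symbol locality $r_{\mathrm s}=2$ and node locality satisfying $2\le r_{\mathrm n}\le b+1$. Moreover, there exists a $b$-spread of $\mathbb{F}_q^M$ for which the resulting code has $r_{\mathrm n}\le M/b$.
   Context: $q$ is a prime power. A $b$-spread of $\mathbb{F}_q^M$ is a set of $b$-dimensional subspaces of $\mathbb{F}_q^M$ that pairwise intersect only in $\{\overline{0}\}$ and whose union is $\mathbb{F}_q^M$. Given $b$-dimensional subspaces $V_1,\dots,V_n$ of $\mathbb{F}_q^M$, the array code whose columns are associated with them is obtained by placing a basis of $V_j$ as columns $(j-1)b+1,\dots,jb$ (the $j$th thick column) of an $M\times bn$ matrix $G$ and taking all $b\times n$ arrays whose column-by-column flattening lies in the row space of $G$. A set $S\subseteq[n]\setminus\{j\}$ is a recovery set for codeword column $j$ if each entry of column $j$ is a fixed $\mathbb{F}_q$-linear combination of the entries in columns indexed by $S$, valid for all codewords (equivalently $V_j\subseteq\sum_{k\in S}V_k$); it is a recovery set for symbol $(i,j)$ if $c_{i,j}$ alone is such a combination (equivalently the $i$th column of the $j$th thick column of $G$ lies in $\sum_{k\in S}V_k$). The node locality $r_{\mathrm n}$ (resp. symbol locality $r_{\mathrm s}$) is the smallest $r$ such that every codeword column (resp. symbol) has a recovery set of size at most $r$. *)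

theory Defs
  imports "HOL-Analysis.Analysis"
begin

text \<open>Ambient space: F_q^M is rendered as the type 'a^'m where 'a is a finite field
(so q = CARD('a) is a prime power) and M = CARD('m).\<close>

definition is_spread :: "nat \<Rightarrow> ('a::field ^ 'm) set set \<Rightarrow> bool" where
  "is_spread b S \<longleftrightarrow>
     (\<forall>V\<in>S. vec.subspace V \<and> vec.dim V = b) \<and>
     (\<forall>V\<in>S. \<forall>W\<in>S. V \<noteq> W \<longrightarrow> V \<inter> W = {0}) \<and>
     \<Union>S = UNIV"

text \<open>Generator matrix G, column by column: g j i is the i-th column (i < b) of the
j-th thick column (j < n).  A codeword is x G for a message x in F_q^M; its (i,j) entry
is the dot product of x with g j i.\<close>

definition code_entry :: "(nat \<Rightarrow> nat \<Rightarrow> 'a::field ^ 'm) \<Rightarrow> ('a ^ 'm) \<Rightarrow> nat \<Rightarrow> nat \<Rightarrow> 'a" where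
  "code_entry g x i j = (\<Sum>t\<in>UNIV. x $ t * g j i $ t)"

definition symbol_recoverable ::
  "nat \<Rightarrow> (nat \<Rightarrow> nat \<Rightarrow> 'a::field ^ 'm) \<Rightarrow> nat set \<Rightarrow> nat \<Rightarrow> nat \<Rightarrow> bool" where
  "symbol_recoverable b g R i j \<longleftrightarrow>
     (\<exists>c :: nat \<Rightarrow> nat \<Rightarrow> 'a. \<forall>x.
        code_entry g x i j = (\<Sum>k\<in>R. \<Sum>i'<b. c k i' * code_entry g x i' k))"

definition column_recoverable ::
  "nat \<Rightarrow> (nat \<Rightarrow> nat \<Rightarrow> 'a::field ^ 'm) \<Rightarrow> nat set \<Rightarrow> nat \<Rightarrow> bool" where
  "column_recoverable b g R j \<longleftrightarrow> (\<forall>i<b. symbol_recoverable b g R i j)"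

definition node_locality :: "nat \<Rightarrow> nat \<Rightarrow> (nat \<Rightarrow> nat \<Rightarrow> 'a::field ^ 'm) \<Rightarrow> nat" where
  "node_locality n b g =
     (LEAST r. \<forall>j<n. \<exists>R. R \<subseteq> {..<n} - {j} \<and> card R \<le> r \<and> column_recoverable b g R j)"

definition symbol_locality :: "nat \<Rightarrow> nat \<Rightarrow> (nat \<Rightarrow> nat \<Rightarrow> 'a::field ^ 'm) \<Rightarrow> nat" where
  "symbol_locality n b g =
     (LEAST r. \<forall>j<n. \<forall>i<b. \<exists>R. R \<subseteq> {..<n} - {j} \<and> card R \<le> r \<and> symbol_recoverable b g R i j)"

text \<open>g is a generator of the array code whose columns are associated with the
elements of S, each exactly once: V enumerates S bijectively by {..<n}, and
g j 0, ..., g j (b-1) is a basis of V j.\<close>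
definition array_code_of :: "nat \<Rightarrow> nat \<Rightarrow> ('a::field ^ 'm) set set \<Rightarrow>
    (nat \<Rightarrow> ('a ^ 'm) set) \<Rightarrow> (nat \<Rightarrow> nat \<Rightarrow> 'a ^ 'm) \<Rightarrow> bool" where
  "array_code_of n b S V g \<longleftrightarrow>
     bij_betw V {..<n} S \<and>
     (\<forall>j<n. inj_on (g j) {..<b} \<and> vec.independent (g j ` {..<b}) \<and>
            vec.span (g j ` {..<b}) = V j)"

end

theory Submission
  imports Defs "HOL-Algebra.Algebraic_Closure_Type"
begin

(* Fix a column j and a vector w outside its space V j; w lies in some other spread element V k.
   For v in V j the vector v - w lies in a spread element V l with l \<noteq> j, so v = w + (v - w) is
   recovered from the columns k and l. This gives two columns per symbol, and b + 1 columns for a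
   whole column (k, plus one l per basis vector of V j). One column never suffices, because
   distinct spread elements meet only in 0.

   For the bound M / b, identify F_q^M with K^t, where K = F_(q^b) is realised as the set of fixed
   points of x \<mapsto> x ^ q ^ b in the algebraic closure of F_q and t = M / b, and take the
   Desarguesian spread of K-lines. For every K-line there are t other K-lines whose direction
   vectors span K^t, and every vector is a sum of vectors on these t lines. *)

definition is_subfield :: "'k::field set \<Rightarrow> bool" where
  "is_subfield P \<longleftrightarrow> 0 \<in> P \<and> 1 \<in> P \<and> (\<forall>x\<in>P. \<forall>y\<in>P. x + y \<in> P \<and> x * y \<in> P)
     \<and> (\<forall>x\<in>P. - x \<in> P \<and> inverse x \<in> P)"

definition is_subspace_over :: "'k::field set \<Rightarrow> 'k set \<Rightarrow> bool" where
  "is_subspace_over P V \<longleftrightarrow> 0 \<in> V \<and> (\<forall>x\<in>V. \<forall>y\<in>V. x + y \<in> V) \<and> (\<forall>c\<in>P. \<forall>x\<in>V. c * x \<in> V)"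

definition lin_comb :: "(nat \<Rightarrow> 'k::field) \<Rightarrow> nat \<Rightarrow> (nat \<Rightarrow> 'k) \<Rightarrow> 'k" where
  "lin_comb \<beta> d c = (\<Sum>i<d. c i * \<beta> i)"

abbreviation coord_vectors :: "nat \<Rightarrow> 'k set \<Rightarrow> (nat \<Rightarrow> 'k) set" where
  "coord_vectors d P \<equiv> PiE {..<d} (\<lambda>_. P)"

lemma finite_subring_is_subfield:
  fixes P :: "'k::field set"
  assumes fin: "finite P" and "0 \<in> P" "1 \<in> P"
    and add: "\<And>x y. x \<in> P \<Longrightarrow> y \<in> P \<Longrightarrow> x + y \<in> P"
    and mult: "\<And>x y. x \<in> P \<Longrightarrow> y \<in> P \<Longrightarrow> x * y \<in> P"
  shows "is_subfield P"
proof -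
  have neg: "- x \<in> P" if x: "x \<in> P" for x
  proof -
    have "(+) x ` P = P" using fin add x by (intro endo_inj_surj) (auto intro: inj_onI)
    then obtain y where "y \<in> P" "x + y = 0" using \<open>0 \<in> P\<close> by (metis imageE)
    then show ?thesis by (simp add: minus_unique)
  qed
  have inv: "inverse x \<in> P" if x: "x \<in> P" for x
  proof (cases "x = 0")
    case False
    have "(*) x ` P = P" using fin mult x False by (intro endo_inj_surj) (auto intro: inj_onI)
    then obtain y where "y \<in> P" "x * y = 1" using \<open>1 \<in> P\<close> by (metis imageE)
    then show ?thesis by (simp add: inverse_unique)
  qed (simp add: \<open>0 \<in> P\<close>)
  show ?thesis unfolding is_subfield_def using assms(2,3) add mult neg inv by simp
qed

lemma subfield_diff_divide:
  assumes "is_subfield P" "x \<in> P" "y \<in> P"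
  shows "x - y \<in> P" "x / y \<in> P"
  using assms unfolding is_subfield_def by (metis diff_conv_add_uminus divide_inverse)+

lemma subfield_subspace_over:
  assumes "is_subfield K" "P \<subseteq> K"
  shows "is_subspace_over P K"
  using assms unfolding is_subfield_def is_subspace_over_def by blast

lemma lin_comb_in_subspace:
  assumes V: "is_subspace_over P V" and \<beta>: "\<forall>i<d. \<beta> i \<in> V" and c: "c \<in> coord_vectors d P"
  shows "lin_comb \<beta> d c \<in> V"
proof -
  have "(\<Sum>i\<in>A. c i * \<beta> i) \<in> V" if "A \<subseteq> {..<d}" for A
    using finite_subset[OF that finite_lessThan] that
  proof (induction A rule: finite_induct)
    case (insert i A)
    then have "c i \<in> P" "\<beta> i \<in> V" using \<beta> c by auto
    then have "c i * \<beta> i \<in> V" using V unfolding is_subspace_over_def by simp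
    then show ?case using insert V unfolding is_subspace_over_def by simp
  qed (use V in \<open>simp add: is_subspace_over_def\<close>)
  then show ?thesis unfolding lin_comb_def by blast
qed

lemma lin_comb_restrict: "lin_comb \<beta> d (restrict c {..<d}) = lin_comb \<beta> d c"
  by (simp add: lin_comb_def)

lemma lin_comb_Suc: "lin_comb (\<beta>(d := v)) (Suc d) c = lin_comb \<beta> d c + c d * v"
  by (simp add: lin_comb_def)

lemma inj_on_lin_comb_extend:
  assumes P: "is_subfield P" and inj: "inj_on (lin_comb \<beta> d) (coord_vectors d P)"
    and v: "v \<notin> lin_comb \<beta> d ` coord_vectors d P"
  shows "inj_on (lin_comb (\<beta>(d := v)) (Suc d)) (coord_vectors (Suc d) P)"
proof (rule inj_onI)
  fix c c' assume c: "c \<in> coord_vectors (Suc d) P" and c': "c' \<in> coord_vectors (Suc d) P"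
    and eq: "lin_comb (\<beta>(d := v)) (Suc d) c = lin_comb (\<beta>(d := v)) (Suc d) c'"
  have last: "c d = c' d"
  proof (rule ccontr)
    assume ne: "c d \<noteq> c' d"
    define e where "e = (\<lambda>i\<in>{..<d}. (c' i - c i) / (c d - c' d))"
    have "c i \<in> P" "c' i \<in> P" if "i \<le> d" for i
      using c c' that by (simp_all add: PiE_iff)
    then have "e \<in> coord_vectors d P"
      unfolding e_def restrict_PiE_iff by (simp add: subfield_diff_divide[OF P])
    moreover have "v = lin_comb \<beta> d e"
    proof -
      have "(c d - c' d) * v = lin_comb \<beta> d c' - lin_comb \<beta> d c"
        using eq by (simp add: lin_comb_Suc left_diff_distrib) (simp add: algebra_simps)
      then have "v = (lin_comb \<beta> d c' - lin_comb \<beta> d c) / (c d - c' d)"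
        using ne by (simp add: field_simps)
      also have "\<dots> = lin_comb \<beta> d e"
        by (simp add: lin_comb_def e_def diff_divide_distrib left_diff_distrib sum_subtractf
            sum_divide_distrib)
      finally show ?thesis .
    qed
    ultimately show False using v by blast
  qed
  then have "lin_comb \<beta> d (restrict c {..<d}) = lin_comb \<beta> d (restrict c' {..<d})"
    using eq by (simp add: lin_comb_Suc lin_comb_restrict)
  moreover have "restrict c {..<d} \<in> coord_vectors d P" "restrict c' {..<d} \<in> coord_vectors d P"
    using c c' by (simp_all add: PiE_iff)
  ultimately have "restrict c {..<d} = restrict c' {..<d}" by (rule inj_onD[OF inj])
  then have "\<forall>i<d. c i = c' i" by (metis lessThan_iff restrict_apply')
  with last c c' show "c = c'"
    by (intro extensionalityI[of _ "{..<Suc d}"]) (auto simp: less_Suc_eq PiE_def)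
qed

lemma lin_comb_extends_to_bij:
  assumes P: "is_subfield P" "finite P" and V: "is_subspace_over P V" "finite V"
    and "\<forall>i<d. \<beta> i \<in> V" "inj_on (lin_comb \<beta> d) (coord_vectors d P)"
  shows "\<exists>d' \<beta>'. (\<forall>i<d'. \<beta>' i \<in> V) \<and> bij_betw (lin_comb \<beta>' d') (coord_vectors d' P) V"
  using assms(5,6)
proof (induction "card V - d" arbitrary: d \<beta> rule: less_induct)
  case less
  have sub: "lin_comb \<beta> d ` coord_vectors d P \<subseteq> V"
    using lin_comb_in_subspace[OF V(1)] less.prems(1) by blast
  show ?case
  proof (cases "lin_comb \<beta> d ` coord_vectors d P = V")
    case True
    then show ?thesis using less.prems by (auto simp: bij_betw_def)
  next
    case False
    then obtain v where v: "v \<in> V" "v \<notin> lin_comb \<beta> d ` coord_vectors d P" using sub by blast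
    have "card P \<ge> 2"
      using P card_mono[of P "{0, 1}"] unfolding is_subfield_def by auto
    have "d < 2 ^ d" by (rule less_exp)
    also have "\<dots> \<le> card P ^ d" using \<open>card P \<ge> 2\<close> by (simp add: power_mono)
    also have "\<dots> = card (lin_comb \<beta> d ` coord_vectors d P)"
      using card_image[OF less.prems(2)] P(2) by (simp add: card_PiE)
    also have "\<dots> < card V" using sub False V(2) by (simp add: psubset_card_mono)
    finally have "card V - Suc d < card V - d" by simp
    moreover have "\<forall>i<Suc d. (\<beta>(d := v)) i \<in> V" using less.prems(1) v(1) by auto
    ultimately show ?thesis
      using less.hyps inj_on_lin_comb_extend[OF P(1) less.prems(2) v(2)] by blast
  qed
qed

lemma subspace_over_finite_subfield_basis:
  assumes "is_subfield P" "finite P" "is_subspace_over P V" "finite V"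
  obtains d \<beta> where "\<forall>i<d. \<beta> i \<in> V" "bij_betw (lin_comb \<beta> d) (coord_vectors d P) V"
  using lin_comb_extends_to_bij[OF assms, of 0] that by (auto simp: inj_on_def)

lemma card_bij_lin_comb:
  assumes "finite P" "bij_betw (lin_comb \<beta> d) (coord_vectors d P) V"
  shows "card V = card P ^ d"
  using bij_betw_same_card[OF assms(2)] assms(1) by (simp add: card_PiE)

lemma finite_field_power_card:
  fixes a :: "'a::{finite,field}"
  shows "a ^ CARD('a) = a"
proof (cases "a = 0")
  case False
  define U where "U = (UNIV :: 'a set) - {0}"
  have "bij_betw ((*) a) U U"
  proof (rule bij_betw_imageI)
    show "inj_on ((*) a) U" using False by (auto intro: inj_onI)
    show "(*) a ` U = U"
      using False by (intro endo_inj_surj) (auto simp: U_def intro: inj_onI)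
  qed
  then have "(\<Prod>x\<in>U. a * x) = (\<Prod>x\<in>U. x)"
    by (rule prod.reindex_bij_betw)
  moreover have "(\<Prod>x\<in>U. a * x) = a ^ card U * (\<Prod>x\<in>U. x)"
    by (simp add: prod.distrib)
  moreover have "(\<Prod>x\<in>U. x) \<noteq> 0" by (simp add: U_def)
  ultimately have "a ^ card U = 1" by simp
  moreover have "CARD('a) = Suc (card U)"
    by (simp add: U_def card_Diff_singleton Suc_diff_1)
  ultimately show ?thesis by simp
qed simp

lemma finite_field_power_card_power:
  fixes a :: "'a::{finite,field}"
  shows "a ^ (CARD('a) ^ k) = a"
  by (induction k) (simp_all add: power_Suc2 power_mult finite_field_power_card)

lemma bij_betw_of_nat_CHAR:
  assumes "0 < CHAR('a::ring_1)"
  shows "bij_betw (of_nat :: nat \<Rightarrow> 'a) {..<CHAR('a)} (range of_nat)"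
  unfolding bij_betw_def
proof
  let ?p = "CHAR('a)"
  have eq_if_le: "m = n" if "m \<le> n" "n < ?p" "(of_nat m :: 'a) = of_nat n" for m n
  proof -
    have "(of_nat (n - m) :: 'a) = 0" using that by (simp add: of_nat_diff)
    then have "?p dvd n - m" by (simp add: of_nat_eq_0_iff_char_dvd)
    then have "n - m = 0" using that(2) by (auto dest: dvd_imp_le)
    then show ?thesis using that(1) by simp
  qed
  show "inj_on (of_nat :: nat \<Rightarrow> 'a) {..<?p}"
  proof (rule inj_onI)
    fix m n assume "m \<in> {..<?p}" "n \<in> {..<?p}" "(of_nat m :: 'a) = of_nat n"
    then show "m = n" using eq_if_le[of m n] eq_if_le[of n m] by (cases "m \<le> n") auto
  qed
  have mod_CHAR: "(of_nat n :: 'a) = of_nat (n mod ?p)" for n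
  proof -
    have "(of_nat n :: 'a) = of_nat (n mod ?p + ?p * (n div ?p))" by (simp only: mod_mult_div_eq)
    also have "\<dots> = of_nat (n mod ?p)" by (simp only: of_nat_add of_nat_mult of_nat_CHAR) simp
    finally show ?thesis .
  qed
  show "of_nat ` {..<?p} = range (of_nat :: nat \<Rightarrow> 'a)"
  proof (intro equalityI subsetI)
    fix y assume "y \<in> range (of_nat :: nat \<Rightarrow> 'a)"
    then obtain n where "y = of_nat n" by blast
    then show "y \<in> of_nat ` {..<?p}" using mod_CHAR[of n] assms by simp
  qed blast
qed

lemma card_finite_field_CHAR_power:
  obtains d where "CARD('a::{finite,field}) = CHAR('a) ^ d"
proof -
  define P where "P = range (of_nat :: nat \<Rightarrow> 'a)"
  have bij: "bij_betw of_nat {..<CHAR('a)} P"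
    unfolding P_def by (rule bij_betw_of_nat_CHAR) (simp add: finite_imp_CHAR_pos)
  then have "finite P" "card P = CHAR('a)"
    using bij_betw_finite[OF bij] bij_betw_same_card[OF bij] by simp_all
  have "is_subfield P"
    using \<open>finite P\<close>
  proof (rule finite_subring_is_subfield)
    show "0 \<in> P" "1 \<in> P" unfolding P_def by (metis of_nat_0 of_nat_1 rangeI)+
    show "x + y \<in> P" "x * y \<in> P" if "x \<in> P" "y \<in> P" for x y
      using that unfolding P_def by (auto simp flip: of_nat_add of_nat_mult)
  qed
  moreover have "is_subspace_over P UNIV" by (simp add: is_subspace_over_def)
  ultimately obtain d \<beta> where "bij_betw (lin_comb \<beta> d) (coord_vectors d P) UNIV"
    using subspace_over_finite_subfield_basis \<open>finite P\<close> finite[of UNIV] by blast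
  then have "CARD('a) = CHAR('a) ^ d"
    using card_bij_lin_comb[OF \<open>finite P\<close>] \<open>card P = CHAR('a)\<close> by simp
  then show ?thesis by (rule that)
qed

lemma card_roots_separable:
  fixes f :: "'a::alg_closed_field poly"
  assumes "f \<noteq> 0" and "\<And>x. poly f x = 0 \<Longrightarrow> poly (Polynomial.pderiv f) x \<noteq> 0"
  shows "card {x. poly f x = 0} = Polynomial.degree f"
  using assms
proof (induction "Polynomial.degree f" arbitrary: f rule: less_induct)
  case (less f)
  show ?case
  proof (cases "Polynomial.degree f = 0")
    case True
    then obtain c where "f = [:c:]" by (meson degree_eq_zeroE)
    with less.prems True show ?thesis by simp
  next
    case False
    then obtain x where x: "poly f x = 0"
      using alg_closed_imp_poly_has_root by blast
    then obtain g where f: "f = [:-x, 1:] * g"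
      using poly_eq_0_iff_dvd by (blast elim: dvdE)
    have "g \<noteq> 0" using less.prems f by auto
    have deg: "Polynomial.degree f = Suc (Polynomial.degree g)"
      unfolding f using \<open>g \<noteq> 0\<close> by (subst degree_mult_eq) auto
    have "Polynomial.pderiv [:-x, 1:] = 1" by (simp add: pderiv_pCons)
    then have pderiv_f: "Polynomial.pderiv f = g + [:-x, 1:] * Polynomial.pderiv g"
      unfolding f by (simp only: pderiv_mult) simp
    have "poly g x \<noteq> 0"
      using less.prems(2)[OF x] by (auto simp: pderiv_f)
    moreover have "poly (Polynomial.pderiv g) y \<noteq> 0" if "poly g y = 0" for y
    proof -
      have "poly f y = 0" using that by (simp add: f)
      then have "poly (Polynomial.pderiv f) y \<noteq> 0" by (rule less.prems(2))
      then show ?thesis using that by (simp add: pderiv_f)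
    qed
    then have "card {y. poly g y = 0} = Polynomial.degree g"
      using less.hyps deg \<open>g \<noteq> 0\<close> by simp
    moreover have "{y. poly f y = 0} = insert x {y. poly g y = 0}"
      by (auto simp: f)
    ultimately show ?thesis
      using poly_roots_finite[OF \<open>g \<noteq> 0\<close>] deg by simp
  qed
qed

lemma is_subfield_range_to_ac: "is_subfield (range (to_ac :: 'a::field \<Rightarrow> 'a alg_closure))"
  unfolding is_subfield_def
  by (auto simp flip: to_ac_add to_ac_mult to_ac_minus to_ac_inverse to_ac_0 to_ac_1 intro: rangeI)

lemma Frobenius_fixed_field:
  fixes N :: nat
  assumes p: "Factorial_Ring.prime CHAR('e::alg_closed_field)" and N: "N = CHAR('e) ^ k" "0 < k"
  shows "is_subfield {x :: 'e. x ^ N = x}" "finite {x :: 'e. x ^ N = x}"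
    "card {x :: 'e. x ^ N = x} = N"
proof -
  let ?K = "{x :: 'e. x ^ N = x}"
  have "2 \<le> CHAR('e)" using p by (rule prime_ge_2_nat)
  moreover have "CHAR('e) \<le> CHAR('e) ^ k" using N(2) \<open>2 \<le> CHAR('e)\<close> by (simp add: self_le_power)
  ultimately have "N \<ge> 2" using N(1) by linarith
  define f where "f = (Polynomial.monom 1 N - [:0, 1:] :: 'e poly)"
  have K_roots: "?K = {x. poly f x = 0}" by (simp add: f_def poly_monom)
  have "Polynomial.coeff f N = 1"
    using \<open>N \<ge> 2\<close> by (simp add: f_def coeff_pCons split: nat.split)
  then have "f \<noteq> 0" by auto
  have "Polynomial.degree f = N"
  proof (rule antisym)
    show "Polynomial.degree f \<le> N" unfolding f_def using \<open>N \<ge> 2\<close>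
      by (intro degree_diff_le) (simp_all add: degree_monom_le)
    show "N \<le> Polynomial.degree f" using \<open>Polynomial.coeff f N = 1\<close> by (intro le_degree) simp
  qed
  have "(of_nat N :: 'e) = 0" using N by (simp add: of_nat_eq_0_iff_char_dvd)
  then have "Polynomial.pderiv f = [:- 1:]"
    unfolding f_def by (simp add: pderiv_diff pderiv_monom pderiv_pCons)
  then show "card ?K = N"
    unfolding K_roots using card_roots_separable[OF \<open>f \<noteq> 0\<close>] \<open>Polynomial.degree f = N\<close> by simp
  show "finite ?K" unfolding K_roots using \<open>f \<noteq> 0\<close> by (rule poly_roots_finite)
  then show "is_subfield ?K"
  proof (rule finite_subring_is_subfield)
    show "x + y \<in> ?K" "x * y \<in> ?K" if "x \<in> ?K" "y \<in> ?K" for x y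
      using that freshmans_dream'[OF p N(1)] by (simp_all add: power_mult_distrib)
  qed (use \<open>N \<ge> 2\<close> in simp_all)
qed

lemma subfield_of_degree_over_finite_field:
  fixes b :: nat
  assumes "0 < b"
  obtains K :: "'a::{finite,field} alg_closure set" and \<beta>
  where "is_subfield K" "range to_ac \<subseteq> K" "\<forall>i<b. \<beta> i \<in> K"
    "bij_betw (lin_comb \<beta> b) (coord_vectors b (range to_ac)) K"
proof -
  obtain d0 where q: "CARD('a) = CHAR('a) ^ d0" by (rule card_finite_field_CHAR_power)
  have q2: "CARD('a) \<ge> 2" using card_mono[of UNIV "{0::'a, 1}"] by simp
  then have "0 < d0 * b" using q \<open>0 < b\<close> by (cases d0) auto
  have "CHAR('a) > 0" by (rule finite_imp_CHAR_pos) simp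
  then have "Factorial_Ring.prime CHAR('a alg_closure)" using prime_CHAR_semidom by simp
  define K where "K = {x :: 'a alg_closure. x ^ (CARD('a) ^ b) = x}"
  have "CARD('a) ^ b = CHAR('a alg_closure) ^ (d0 * b)" by (simp add: q power_mult)
  note K = Frobenius_fixed_field[OF \<open>Factorial_Ring.prime _\<close> this \<open>0 < d0 * b\<close>, folded K_def]
  have "range to_ac \<subseteq> K"
    by (auto simp: K_def finite_field_power_card_power simp flip: to_ac_power)
  moreover have "finite (range (to_ac :: 'a \<Rightarrow> 'a alg_closure))" by simp
  ultimately obtain d \<beta> where \<beta>: "\<forall>i<d. \<beta> i \<in> K"
      and bij: "bij_betw (lin_comb \<beta> d) (coord_vectors d (range to_ac)) K"
    using subspace_over_finite_subfield_basis[OF is_subfield_range_to_ac]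
      subfield_subspace_over K(1,2) by blast
  have "card (range (to_ac :: 'a \<Rightarrow> 'a alg_closure)) = CARD('a)"
    by (simp add: card_image inj_to_ac)
  then have "CARD('a) ^ d = CARD('a) ^ b"
    using card_bij_lin_comb[OF _ bij] K(3) by simp
  then have "d = b" using q2 by (simp add: power_inject_exp)
  then show ?thesis using that K(1) \<open>range to_ac \<subseteq> K\<close> \<beta> bij by blast
qed

definition recovery_span :: "nat \<Rightarrow> (nat \<Rightarrow> nat \<Rightarrow> 'a::field ^ 'm) \<Rightarrow> nat set \<Rightarrow> ('a ^ 'm) set" where
  "recovery_span b g R = {x. \<exists>c. x = (\<Sum>k\<in>R. \<Sum>i<b. c k i *s g k i)}"

lemma code_entry_axis: "code_entry g (axis t 1) i j = g j i $ t"
proof -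
  have "code_entry g (axis t 1) i j = (\<Sum>s\<in>UNIV. if s = t then g j i $ s else 0)"
    unfolding code_entry_def by (intro sum.cong) (auto simp: axis_def)
  then show ?thesis by simp
qed

lemma symbol_recoverable_iff: "symbol_recoverable b g R i j \<longleftrightarrow> g j i \<in> recovery_span b g R"
proof
  assume "symbol_recoverable b g R i j"
  then obtain c where c: "\<And>x. code_entry g x i j = (\<Sum>k\<in>R. \<Sum>i'<b. c k i' * code_entry g x i' k)"
    unfolding symbol_recoverable_def by blast
  have "g j i = (\<Sum>k\<in>R. \<Sum>i'<b. c k i' *s g k i')"
  proof (subst vec_eq_iff, intro allI)
    fix t
    show "g j i $ t = (\<Sum>k\<in>R. \<Sum>i'<b. c k i' *s g k i') $ t"
      using c[of "axis t 1"] by (simp add: code_entry_axis)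
  qed
  then show "g j i \<in> recovery_span b g R" unfolding recovery_span_def by blast
next
  assume "g j i \<in> recovery_span b g R"
  then obtain c where c: "g j i = (\<Sum>k\<in>R. \<Sum>i'<b. c k i' *s g k i')"
    unfolding recovery_span_def by blast
  have "code_entry g x i j = (\<Sum>k\<in>R. \<Sum>i'<b. c k i' * code_entry g x i' k)" for x
    unfolding code_entry_def c
    by (simp add: sum_distrib_left algebra_simps sum.swap[where A = UNIV])
  then show "symbol_recoverable b g R i j" unfolding symbol_recoverable_def by blast
qed

lemma column_recoverable_iff:
  "column_recoverable b g R j \<longleftrightarrow> (\<forall>i<b. g j i \<in> recovery_span b g R)"
  by (simp add: column_recoverable_def symbol_recoverable_iff)

lemma subspace_recovery_span: "vec.subspace (recovery_span b g R)"
  unfolding vec.subspace_def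
proof (intro conjI ballI allI)
  show "0 \<in> recovery_span b g R"
    unfolding recovery_span_def by (auto intro!: exI[of _ "\<lambda>_ _. 0"])
next
  fix x y assume "x \<in> recovery_span b g R" "y \<in> recovery_span b g R"
  then obtain c d where "x = (\<Sum>k\<in>R. \<Sum>i<b. c k i *s g k i)" "y = (\<Sum>k\<in>R. \<Sum>i<b. d k i *s g k i)"
    unfolding recovery_span_def by blast
  then have "x + y = (\<Sum>k\<in>R. \<Sum>i<b. (c k i + d k i) *s g k i)"
    by (simp add: sum.distrib vector_sadd_rdistrib)
  then show "x + y \<in> recovery_span b g R"
    unfolding recovery_span_def by (intro CollectI exI[of _ "\<lambda>k i. c k i + d k i"])
next
  fix a x assume "x \<in> recovery_span b g R"
  then obtain c where "x = (\<Sum>k\<in>R. \<Sum>i<b. c k i *s g k i)"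
    unfolding recovery_span_def by blast
  then have "a *s x = (\<Sum>k\<in>R. \<Sum>i<b. (a * c k i) *s g k i)"
    by (simp add: vec.scale_sum_right)
  then show "a *s x \<in> recovery_span b g R"
    unfolding recovery_span_def by (intro CollectI exI[of _ "\<lambda>k i. a * c k i"])
qed

lemma generator_in_recovery_span:
  assumes "k \<in> R" "finite R" "i < b"
  shows "g k i \<in> recovery_span b g R"
proof -
  define c where "c = (\<lambda>k' i'. if k' = k \<and> i' = i then (1::'a) else 0)"
  have "(\<Sum>i'<b. c k' i' *s g k' i') = (if k' = k then g k i else 0)" for k'
  proof -
    have "(\<Sum>i'<b. c k' i' *s g k' i') = (\<Sum>i'<b. if k' = k \<and> i' = i then g k i else 0)"
      by (intro sum.cong) (auto simp: c_def)
    then show ?thesis using assms(3) by (simp add: sum.delta)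
  qed
  then have "(\<Sum>k'\<in>R. \<Sum>i'<b. c k' i' *s g k' i') = g k i"
    using assms(1,2) by (simp add: sum.delta)
  then show ?thesis unfolding recovery_span_def by (auto intro!: exI[of _ c])
qed

lemma recovery_span_empty: "recovery_span b g {} = {0}"
  unfolding recovery_span_def by auto

lemma recovery_span_singleton_subset:
  assumes "vec.subspace W" "\<forall>i<b. g k i \<in> W"
  shows "recovery_span b g {k} \<subseteq> W"
  unfolding recovery_span_def using assms
  by (auto intro!: vec.subspace_sum vec.subspace_scale)

locale spread_code =
  fixes b :: nat and S :: "('a::field ^ 'm) set set" and n :: nat
    and V :: "nat \<Rightarrow> ('a ^ 'm) set" and g :: "nat \<Rightarrow> nat \<Rightarrow> 'a ^ 'm"
  assumes spread: "is_spread b S" and code: "array_code_of n b S V g"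
begin

lemma column_space_in_spread: "j < n \<Longrightarrow> V j \<in> S"
  using code unfolding array_code_of_def bij_betw_def by auto

lemma spread_member_is_column_space: "W \<in> S \<Longrightarrow> \<exists>j<n. V j = W"
  using code unfolding array_code_of_def bij_betw_def by auto

lemma subspace_column_space: "j < n \<Longrightarrow> vec.subspace (V j)"
  using column_space_in_spread spread unfolding is_spread_def by auto

lemma dim_column_space: "j < n \<Longrightarrow> vec.dim (V j) = b"
  using column_space_in_spread spread unfolding is_spread_def by auto

lemma column_spaces_disjoint:
  assumes "j < n" "k < n" "j \<noteq> k"
  shows "V j \<inter> V k = {0}"
proof -
  have "V j \<noteq> V k"
    using code assms unfolding array_code_of_def bij_betw_def inj_on_def by auto
  moreover have "V j \<in> S" "V k \<in> S" using assms column_space_in_spread by auto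
  ultimately show ?thesis using spread unfolding is_spread_def by simp
qed

lemma column_space_cover: "\<exists>j<n. x \<in> V j"
proof -
  have "x \<in> \<Union>S" using spread unfolding is_spread_def by simp
  then obtain W where "W \<in> S" "x \<in> W" by blast
  then show ?thesis using spread_member_is_column_space by blast
qed

lemma column_space_span: "j < n \<Longrightarrow> V j = vec.span (g j ` {..<b})"
  using code unfolding array_code_of_def by auto

lemma generator_in_column_space: "j < n \<Longrightarrow> i < b \<Longrightarrow> g j i \<in> V j"
  using column_space_span by (simp add: vec.span_base)

lemma generator_nonzero:
  assumes "j < n" "i < b"
  shows "g j i \<noteq> 0"
proof
  assume "g j i = 0"
  then have "vec.dependent (g j ` {..<b})"
    using assms(2) by (intro vec.dependent_zero) force
  then show False using code assms(1) unfolding array_code_of_def by blast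
qed

lemma column_space_subset_recovery_span:
  assumes "R \<subseteq> {..<n}" "k \<in> R"
  shows "V k \<subseteq> recovery_span b g R"
proof -
  have "g k ` {..<b} \<subseteq> recovery_span b g R"
    using generator_in_recovery_span[OF assms(2)] finite_subset[OF assms(1)] by auto
  then have "vec.span (g k ` {..<b}) \<subseteq> recovery_span b g R"
    by (rule vec.span_minimal[OF _ subspace_recovery_span])
  then show ?thesis using column_space_span assms by auto
qed

lemma sum_in_recovery_span:
  assumes "R \<subseteq> {..<n}" "k \<in> R" "l \<in> R" "x \<in> V k" "y \<in> V l"
  shows "x + y \<in> recovery_span b g R"
proof -
  have "x \<in> recovery_span b g R" "y \<in> recovery_span b g R"
    using column_space_subset_recovery_span[OF assms(1)] assms(2-5) by auto
  then show ?thesis by (rule vec.subspace_add[OF subspace_recovery_span])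
qed

lemma symbol_recovery_set_card_ge_2:
  assumes "j < n" "i < b" "R \<subseteq> {..<n} - {j}" "symbol_recoverable b g R i j"
  shows "2 \<le> card R"
proof (rule ccontr)
  assume "\<not> 2 \<le> card R"
  have in_span: "g j i \<in> recovery_span b g R"
    using assms(4) by (simp add: symbol_recoverable_iff)
  have "g j i \<noteq> 0" "g j i \<in> V j"
    using assms(1,2) generator_nonzero generator_in_column_space by auto
  have "finite R" using assms(3) by (rule finite_subset) simp
  consider "R = {}" | k where "R = {k}"
  proof (cases "R = {}")
    case False
    then have "card R = 1"
      using \<open>finite R\<close> \<open>\<not> 2 \<le> card R\<close> card_gt_0_iff[of R] by linarith
    then obtain k where "R = {k}" by (rule card_1_singletonE)
    then show ?thesis by (rule that(2))
  qed (rule that(1))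
  then show False
  proof cases
    case 1
    then show False using in_span \<open>g j i \<noteq> 0\<close> recovery_span_empty by auto
  next
    case 2
    then have "k < n" "k \<noteq> j" using assms(3) by auto
    then have "recovery_span b g {k} \<subseteq> V k"
      by (intro recovery_span_singleton_subset)
        (auto simp: subspace_column_space generator_in_column_space)
    then show False
      using in_span \<open>g j i \<noteq> 0\<close> \<open>g j i \<in> V j\<close> 2
        column_spaces_disjoint[OF assms(1) \<open>k < n\<close>] \<open>k \<noteq> j\<close> by auto
  qed
qed

lemma translate_outside_column_space:
  assumes "b < CARD('m)" "j < n"
  obtains k w where "k < n" "k \<noteq> j" "w \<in> V k"
    "\<And>v. v \<in> V j \<Longrightarrow> \<exists>l<n. l \<noteq> j \<and> v - w \<in> V l"
proof -
  have "V j \<noteq> UNIV"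
    using dim_column_space[OF assms(2)] vec_dim_card[where 'a='a and 'n='m] assms(1) by auto
  then obtain w where w: "w \<notin> V j" by blast
  obtain k where k: "k < n" "w \<in> V k" using column_space_cover by blast
  have "\<exists>l<n. l \<noteq> j \<and> v - w \<in> V l" if "v \<in> V j" for v
  proof -
    obtain l where l: "l < n" "v - w \<in> V l" using column_space_cover by blast
    have "l \<noteq> j"
      using w that l vec.subspace_diff[OF subspace_column_space[OF assms(2)], of v "v - w"] by auto
    then show ?thesis using l by blast
  qed
  moreover have "k \<noteq> j" using w k by auto
  ultimately show ?thesis using that k by blast
qed

lemma symbol_recovery_set_2:
  assumes "b < CARD('m)" "j < n" "i < b"
  shows "\<exists>R. R \<subseteq> {..<n} - {j} \<and> card R \<le> 2 \<and> symbol_recoverable b g R i j"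
proof -
  obtain k w where k: "k < n" "k \<noteq> j" "w \<in> V k"
    and translate: "\<And>v. v \<in> V j \<Longrightarrow> \<exists>l<n. l \<noteq> j \<and> v - w \<in> V l"
    using translate_outside_column_space[OF assms(1,2)] by blast
  obtain l where l: "l < n" "l \<noteq> j" "g j i - w \<in> V l"
    using translate generator_in_column_space assms by blast
  have "w + (g j i - w) \<in> recovery_span b g {k, l}"
    using k l by (intro sum_in_recovery_span) auto
  then have "symbol_recoverable b g {k, l} i j" by (simp add: symbol_recoverable_iff)
  moreover have "card {k, l} \<le> 2" by (simp add: card_insert_if)
  moreover have "{k, l} \<subseteq> {..<n} - {j}" using k l by simp
  ultimately show ?thesis by blast
qed

lemma column_recovery_set_b_plus_1:
  assumes "b < CARD('m)" "j < n"
  shows "\<exists>R. R \<subseteq> {..<n} - {j} \<and> card R \<le> b + 1 \<and> column_recoverable b g R j"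
proof -
  obtain k w where k: "k < n" "k \<noteq> j" "w \<in> V k"
    and translate: "\<And>v. v \<in> V j \<Longrightarrow> \<exists>l<n. l \<noteq> j \<and> v - w \<in> V l"
    using translate_outside_column_space[OF assms] by blast
  have "\<forall>i\<in>{..<b}. \<exists>l. l < n \<and> l \<noteq> j \<and> g j i - w \<in> V l"
    using translate generator_in_column_space assms(2) by simp
  then obtain l where l: "\<forall>i\<in>{..<b}. l i < n \<and> l i \<noteq> j \<and> g j i - w \<in> V (l i)"
    by metis
  let ?R = "insert k (l ` {..<b})"
  have R: "?R \<subseteq> {..<n} - {j}" using k l by auto
  have "card ?R \<le> card (l ` {..<b}) + 1" by (simp add: card_insert_if)
  also have "card (l ` {..<b}) \<le> b" using card_image_le[of "{..<b}" l] by simp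
  finally have "card ?R \<le> b + 1" by simp
  moreover have "column_recoverable b g ?R j"
    unfolding column_recoverable_iff
  proof (intro allI impI)
    fix i assume "i < b"
    then have "w + (g j i - w) \<in> recovery_span b g ?R"
      using k l R by (intro sum_in_recovery_span[of ?R k "l i"]) auto
    then show "g j i \<in> recovery_span b g ?R" by simp
  qed
  ultimately show ?thesis using R by (intro exI[of _ ?R]) simp
qed

theorem localities:
  assumes "0 < b" "b < CARD('m)"
  shows "symbol_locality n b g = 2" "2 \<le> node_locality n b g" "node_locality n b g \<le> b + 1"
proof -
  have "0 < n" using column_space_cover[of 0] by auto
  let ?symbol = "\<lambda>r. \<forall>j<n. \<forall>i<b. \<exists>R. R \<subseteq> {..<n} - {j} \<and> card R \<le> r \<and> symbol_recoverable b g R i j"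
  let ?column = "\<lambda>r. \<forall>j<n. \<exists>R. R \<subseteq> {..<n} - {j} \<and> card R \<le> r \<and> column_recoverable b g R j"
  have card_ge_2: "2 \<le> r"
    if "R \<subseteq> {..<n} - {0}" "card R \<le> r" "symbol_recoverable b g R 0 0" for R r
    using that symbol_recovery_set_card_ge_2[OF \<open>0 < n\<close> assms(1) that(1,3)] by linarith
  have symbol_ub: "?symbol 2" using symbol_recovery_set_2[OF assms(2)] by simp
  have symbol_lb: "2 \<le> r" if "?symbol r" for r
  proof -
    have "\<exists>R. R \<subseteq> {..<n} - {0} \<and> card R \<le> r \<and> symbol_recoverable b g R 0 0"
      using that \<open>0 < n\<close> assms(1) by simp
    then show ?thesis using card_ge_2 by (elim exE conjE)
  qed
  show "symbol_locality n b g = 2"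
    using Least_le[where P = ?symbol, OF symbol_ub]
      symbol_lb[OF LeastI[where P = ?symbol, OF symbol_ub]]
    unfolding symbol_locality_def by linarith
  have column_ub: "?column (b + 1)" using column_recovery_set_b_plus_1[OF assms(2)] by simp
  have column_lb: "2 \<le> r" if "?column r" for r
  proof -
    have "\<exists>R. R \<subseteq> {..<n} - {0} \<and> card R \<le> r \<and> column_recoverable b g R 0"
      using that \<open>0 < n\<close> by simp
    then obtain R where "R \<subseteq> {..<n} - {0}" "card R \<le> r" "symbol_recoverable b g R 0 0"
      using assms(1) unfolding column_recoverable_def by blast
    then show ?thesis by (rule card_ge_2)
  qed
  show "2 \<le> node_locality n b g" "node_locality n b g \<le> b + 1"
    using Least_le[where P = ?column, OF column_ub]
      column_lb[OF LeastI[where P = ?column, OF column_ub]]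
    unfolding node_locality_def by simp_all
qed

end

(* K plays the role of F_(q^b): h embeds F_q into K and \<beta> is a basis of K over the image of h.
   Via e, the coordinates of x :: 'a ^ 'm are grouped into t blocks of size b, and block k is read
   as the element K_coord x k of K; so K_coord x is x seen as a vector of K^t. *)
locale extension_coordinates =
  fixes h :: "'a::field \<Rightarrow> 'e::field" and K :: "'e set" and \<beta> :: "nat \<Rightarrow> 'e" and b :: nat
    and t :: nat and e :: "'m::finite \<Rightarrow> nat \<times> nat"
  assumes h_add: "\<And>x y. h (x + y) = h x + h y" and h_mult: "\<And>x y. h (x * y) = h x * h y"
    and h_inj: "inj h" and subfield: "is_subfield K" and h_in_K: "\<And>x. h x \<in> K"
    and \<beta>_in_K: "\<And>i. i < b \<Longrightarrow> \<beta> i \<in> K"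
    and basis: "bij_betw (lin_comb \<beta> b) (coord_vectors b (range h)) K"
    and e_bij: "bij_betw e UNIV ({..<b} \<times> {..<t})" and t_ge_2: "2 \<le> t"
begin

lemma zero_in_K: "0 \<in> K" and one_in_K: "1 \<in> K"
  and add_in_K: "x \<in> K \<Longrightarrow> y \<in> K \<Longrightarrow> x + y \<in> K"
  and mult_in_K: "x \<in> K \<Longrightarrow> y \<in> K \<Longrightarrow> x * y \<in> K"
  and inverse_in_K: "x \<in> K \<Longrightarrow> inverse x \<in> K"
  using subfield unfolding is_subfield_def by simp_all

lemma diff_in_K: "x \<in> K \<Longrightarrow> y \<in> K \<Longrightarrow> x - y \<in> K"
  by (rule subfield_diff_divide(1)[OF subfield])

lemma h_zero: "h 0 = 0"
  by (metis add.right_neutral add_left_cancel h_add)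

lemma h_one: "h 1 = 1"
proof -
  have "h 1 * h 1 = h 1" using h_mult[of 1 1] by simp
  moreover have "h 1 \<noteq> 0" using h_inj h_zero by (metis injD one_neq_zero)
  ultimately show ?thesis by simp
qed

definition K_elem :: "(nat \<Rightarrow> 'a) \<Rightarrow> 'e" where "K_elem a = (\<Sum>i<b. h (a i) * \<beta> i)"

lemma K_elem_lin_comb: "K_elem a = lin_comb \<beta> b (restrict (\<lambda>i. h (a i)) {..<b})"
  unfolding K_elem_def lin_comb_def by simp

lemma restrict_h_in_coord_vectors: "restrict (\<lambda>i. h (a i)) {..<b} \<in> coord_vectors b (range h)"
  by auto

lemma K_elem_in_K: "K_elem a \<in> K"
  using basis restrict_h_in_coord_vectors K_elem_lin_comb unfolding bij_betw_def by auto

lemma K_elem_surj: "y \<in> K \<Longrightarrow> \<exists>a. y = K_elem a"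
proof -
  assume "y \<in> K"
  then obtain c where c: "c \<in> coord_vectors b (range h)" "y = lin_comb \<beta> b c"
    using basis unfolding bij_betw_def by auto
  define a where "a = (\<lambda>i. inv_into UNIV h (c i))"
  have "K_elem a = lin_comb \<beta> b c"
    unfolding K_elem_def lin_comb_def a_def
  proof (intro sum.cong refl)
    fix i assume "i \<in> {..<b}"
    then have "c i \<in> range h" using c by auto
    then show "h (inv_into UNIV h (c i)) * \<beta> i = c i * \<beta> i" by (simp add: f_inv_into_f)
  qed
  then show ?thesis using c by metis
qed

lemma K_elem_inj: "K_elem a = K_elem a' \<Longrightarrow> i < b \<Longrightarrow> a i = a' i"
proof -
  assume eq: "K_elem a = K_elem a'" and i: "i < b"
  have "inj_on (lin_comb \<beta> b) (coord_vectors b (range h))"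
    using basis unfolding bij_betw_def by auto
  then have "restrict (\<lambda>i. h (a i)) {..<b} = restrict (\<lambda>i. h (a' i)) {..<b}"
    using eq restrict_h_in_coord_vectors K_elem_lin_comb by (metis inj_onD)
  then have "h (a i) = h (a' i)" using i by (metis lessThan_iff restrict_apply')
  then show "a i = a' i" using h_inj by (simp add: inj_eq)
qed

lemma K_elem_cong: "(\<And>i. i < b \<Longrightarrow> a i = a' i) \<Longrightarrow> K_elem a = K_elem a'"
  unfolding K_elem_def by (intro sum.cong) auto

lemma K_elem_zero: "K_elem (\<lambda>_. 0) = 0"
  unfolding K_elem_def by (simp add: h_zero)

lemma K_elem_eq_0: "K_elem a = 0 \<Longrightarrow> i < b \<Longrightarrow> a i = 0"
  using K_elem_inj[of a "\<lambda>_. 0"] K_elem_zero by simp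

lemma K_elem_unit: "i < b \<Longrightarrow> K_elem (\<lambda>k. if k = i then 1 else 0) = \<beta> i"
proof -
  assume i: "i < b"
  have "K_elem (\<lambda>k. if k = i then 1 else 0) = (\<Sum>k<b. if k = i then \<beta> k else 0)"
    unfolding K_elem_def by (intro sum.cong) (auto simp: h_zero h_one)
  also have "\<dots> = \<beta> i" using i by simp
  finally show ?thesis .
qed

lemma \<beta>_inj: "i < b \<Longrightarrow> i' < b \<Longrightarrow> \<beta> i = \<beta> i' \<Longrightarrow> i = i'"
proof -
  assume i: "i < b" "i' < b" "\<beta> i = \<beta> i'"
  then have "K_elem (\<lambda>k. if k = i then 1 else 0) = K_elem (\<lambda>k. if k = i' then 1 else 0)"
    using K_elem_unit by simp
  from K_elem_inj[OF this i(1)] show "i = i'" by (metis one_neq_zero)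
qed

definition \<iota> :: "nat \<times> nat \<Rightarrow> 'm" where "\<iota> = inv_into UNIV e"

lemma e_\<iota>: "i < b \<Longrightarrow> k < t \<Longrightarrow> e (\<iota> (i, k)) = (i, k)"
  unfolding \<iota>_def using e_bij by (simp add: bij_betw_inv_into_right)

lemma \<iota>_e: "\<iota> (e m) = m"
  unfolding \<iota>_def using e_bij by (simp add: bij_betw_inv_into_left)

lemma e_range: "fst (e m) < b" "snd (e m) < t"
proof -
  have "e m \<in> range e" by simp
  then have "e m \<in> {..<b} \<times> {..<t}" using e_bij unfolding bij_betw_def by simp
  then show "fst (e m) < b" "snd (e m) < t" by (auto simp: mem_Times_iff)
qed

definition K_coord :: "'a ^ 'm \<Rightarrow> nat \<Rightarrow> 'e" where "K_coord x k = K_elem (\<lambda>i. x $ \<iota> (i, k))"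

lemma K_coord_add: "K_coord (x + y) k = K_coord x k + K_coord y k"
  unfolding K_coord_def K_elem_def by (simp add: h_add sum.distrib algebra_simps)

lemma K_coord_scale: "K_coord (s *s x) k = h s * K_coord x k"
  unfolding K_coord_def K_elem_def by (simp add: h_mult sum_distrib_left algebra_simps)

lemma K_coord_zero: "K_coord 0 k = 0"
  unfolding K_coord_def K_elem_def by (simp add: h_zero)

lemma K_coord_sum: "K_coord (sum f J) k = (\<Sum>j\<in>J. K_coord (f j) k)"
  by (induction J rule: infinite_finite_induct) (simp_all add: K_coord_zero K_coord_add)

lemma K_coord_in_K: "K_coord x k \<in> K"
  unfolding K_coord_def by (rule K_elem_in_K)

lemma K_coord_inj: "(\<And>k. k < t \<Longrightarrow> K_coord x k = K_coord y k) \<Longrightarrow> x = y"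
proof -
  assume H: "\<And>k. k < t \<Longrightarrow> K_coord x k = K_coord y k"
  show "x = y"
  proof (subst vec_eq_iff, intro allI)
    fix m
    obtain i k where ik: "e m = (i, k)" by (cases "e m")
    have i: "i < b" "k < t" using e_range[of m] ik by auto
    have "x $ \<iota> (i, k) = y $ \<iota> (i, k)"
      using K_elem_inj[OF H[OF i(2), unfolded K_coord_def] i(1)] by simp
    then show "x $ m = y $ m" using \<iota>_e[of m] ik by simp
  qed
qed

lemma K_coord_surj: "(\<And>k. k < t \<Longrightarrow> w k \<in> K) \<Longrightarrow> \<exists>x. \<forall>k<t. K_coord x k = w k"
proof -
  assume W: "\<And>k. k < t \<Longrightarrow> w k \<in> K"
  define a where "a = (\<lambda>k. SOME a. w k = K_elem a)"
  have a: "w k = K_elem (a k)" if "k < t" for k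
    unfolding a_def using K_elem_surj[OF W[OF that]] by (rule someI_ex)
  define x :: "'a ^ 'm" where "x = (\<chi> m. a (snd (e m)) (fst (e m)))"
  have "K_coord x k = w k" if k: "k < t" for k
  proof -
    have "K_coord x k = K_elem (a k)"
      unfolding K_coord_def by (rule K_elem_cong) (simp add: x_def e_\<iota> k)
    then show ?thesis using a[OF k] by simp
  qed
  then show ?thesis by blast
qed

definition K_vector :: "(nat \<Rightarrow> 'e) \<Rightarrow> bool" where "K_vector v \<longleftrightarrow> (\<forall>k<t. v k \<in> K)"
definition nonzero_K_vector :: "(nat \<Rightarrow> 'e) \<Rightarrow> bool" where
  "nonzero_K_vector v \<longleftrightarrow> K_vector v \<and> (\<exists>k<t. v k \<noteq> 0)"
definition K_line :: "(nat \<Rightarrow> 'e) \<Rightarrow> ('a ^ 'm) set" where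
  "K_line v = {x. \<exists>c\<in>K. \<forall>k<t. K_coord x k = c * v k}"
definition desarguesian_spread :: "('a ^ 'm) set set" where
  "desarguesian_spread = {K_line v | v. nonzero_K_vector v}"

definition K_spanning :: "(nat \<Rightarrow> nat \<Rightarrow> 'e) \<Rightarrow> bool" where
  "K_spanning w \<longleftrightarrow>
     (\<forall>y. K_vector y \<longrightarrow> (\<exists>c. K_vector c \<and> (\<forall>k'<t. y k' = (\<Sum>k<t. c k * w k k'))))"

lemma zero_in_K_line: "0 \<in> K_line v"
  unfolding K_line_def using zero_in_K by (auto simp: K_coord_zero intro!: bexI[of _ 0])

lemma subspace_K_line: "vec.subspace (K_line v)"
  unfolding vec.subspace_def
proof (intro conjI ballI allI)
  show "0 \<in> K_line v" by (rule zero_in_K_line)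
next
  fix x y assume "x \<in> K_line v" "y \<in> K_line v"
  then obtain c d where "c \<in> K" "\<forall>k<t. K_coord x k = c * v k" "d \<in> K" "\<forall>k<t. K_coord y k = d * v k"
    unfolding K_line_def by blast
  then show "x + y \<in> K_line v" unfolding K_line_def
    by (auto simp: K_coord_add algebra_simps intro!: bexI[of _ "c + d"] add_in_K)
next
  fix s x assume "x \<in> K_line v"
  then obtain c where "c \<in> K" "\<forall>k<t. K_coord x k = c * v k"
    unfolding K_line_def by blast
  then show "s *s x \<in> K_line v" unfolding K_line_def
    by (auto simp: K_coord_scale algebra_simps intro!: bexI[of _ "h s * c"] mult_in_K h_in_K)
qed

definition line_basis :: "(nat \<Rightarrow> 'e) \<Rightarrow> nat \<Rightarrow> 'a ^ 'm" where
  "line_basis v i = (SOME x. \<forall>k<t. K_coord x k = \<beta> i * v k)"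

lemma K_coord_line_basis:
  assumes "K_vector v" "i < b" "k < t"
  shows "K_coord (line_basis v i) k = \<beta> i * v k"
proof -
  have "\<exists>x. \<forall>k<t. K_coord x k = \<beta> i * v k"
    using assms by (intro K_coord_surj) (simp add: K_vector_def \<beta>_in_K mult_in_K)
  then have "\<forall>k<t. K_coord (line_basis v i) k = \<beta> i * v k"
    unfolding line_basis_def by (rule someI_ex)
  then show ?thesis using assms(3) by blast
qed

lemma K_coord_sum_line_basis:
  assumes "K_vector v" "k < t"
  shows "K_coord (\<Sum>i<b. a i *s line_basis v i) k = K_elem a * v k"
  unfolding K_coord_sum K_elem_def sum_distrib_right
  using assms by (intro sum.cong refl) (simp add: K_coord_scale K_coord_line_basis mult.assoc)

lemma dim_K_line:
  assumes "nonzero_K_vector v"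
  shows "vec.dim (K_line v) = b"
proof -
  obtain k0 where k0: "k0 < t" "v k0 \<noteq> 0" using assms unfolding nonzero_K_vector_def by blast
  have v: "K_vector v" using assms unfolding nonzero_K_vector_def by blast
  define B where "B = line_basis v ` {..<b}"
  have inj: "inj_on (line_basis v) {..<b}"
  proof (rule inj_onI)
    fix i i' assume i: "i \<in> {..<b}" "i' \<in> {..<b}" "line_basis v i = line_basis v i'"
    then have "K_coord (line_basis v i) k0 = K_coord (line_basis v i') k0" by simp
    then have "\<beta> i * v k0 = \<beta> i' * v k0"
      using i(1,2) by (simp add: K_coord_line_basis[OF v _ k0(1)])
    then show "i = i'" using \<beta>_inj i k0(2) by simp
  qed
  have "B \<subseteq> K_line v"
    unfolding B_def K_line_def using K_coord_line_basis[OF v] \<beta>_in_K by auto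
  moreover have "K_line v \<subseteq> vec.span B"
  proof
    fix x assume "x \<in> K_line v"
    then obtain c where c: "c \<in> K" "\<forall>k<t. K_coord x k = c * v k" unfolding K_line_def by blast
    obtain a where "c = K_elem a" using K_elem_surj[OF c(1)] by blast
    then have "x = (\<Sum>i<b. a i *s line_basis v i)"
      using c(2) K_coord_sum_line_basis[OF v] by (intro K_coord_inj) simp
    moreover have "(\<Sum>i<b. a i *s line_basis v i) \<in> vec.span B"
      unfolding B_def by (intro vec.span_sum vec.span_scale vec.span_base) auto
    ultimately show "x \<in> vec.span B" by simp
  qed
  moreover have "vec.independent B"
  proof (rule vec.independent_if_scalars_zero)
    show "finite B" unfolding B_def by simp
    fix f x assume sum0: "(\<Sum>x\<in>B. f x *s x) = 0" and x: "x \<in> B"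
    have "(\<Sum>i<b. f (line_basis v i) *s line_basis v i) = 0"
      using sum0 unfolding B_def by (simp add: sum.reindex[OF inj])
    then have "K_coord (\<Sum>i<b. f (line_basis v i) *s line_basis v i) k0 = 0"
      by (simp add: K_coord_zero)
    then have "K_elem (\<lambda>i. f (line_basis v i)) * v k0 = 0"
      by (simp only: K_coord_sum_line_basis[OF v k0(1)])
    then show "f x = 0" using x k0(2) K_elem_eq_0 unfolding B_def by auto
  qed
  ultimately have "card B = vec.dim (K_line v)" by (rule vec.basis_card_eq_dim)
  then show ?thesis unfolding B_def using card_image[OF inj] by simp
qed

lemma K_line_nonzero_coeff:
  assumes "x \<in> K_line v" "x \<noteq> 0"
  obtains c where "c \<in> K" "c \<noteq> 0" "\<forall>k<t. K_coord x k = c * v k"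
proof -
  obtain c where c: "c \<in> K" "\<forall>k<t. K_coord x k = c * v k" using assms unfolding K_line_def by blast
  have "c \<noteq> 0"
  proof
    assume "c = 0"
    then have "\<forall>k<t. K_coord x k = K_coord 0 k" using c by (simp add: K_coord_zero)
    then have "x = 0" using K_coord_inj by metis
    then show False using assms by simp
  qed
  then show ?thesis using c that by blast
qed

lemma K_line_subset_if_overlap:
  assumes "x \<in> K_line v" "x \<in> K_line w" "x \<noteq> 0"
  shows "K_line v \<subseteq> K_line w"
proof
  obtain c where c: "c \<in> K" "c \<noteq> 0" "\<forall>k<t. K_coord x k = c * v k"
    using K_line_nonzero_coeff[OF assms(1,3)] by blast
  obtain c' where c': "c' \<in> K" "c' \<noteq> 0" "\<forall>k<t. K_coord x k = c' * w k"
    using K_line_nonzero_coeff[OF assms(2,3)] by blast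
  fix y assume "y \<in> K_line v"
  then obtain d where d: "d \<in> K" "\<forall>k<t. K_coord y k = d * v k" unfolding K_line_def by blast
  have "K_coord y k = (d * inverse c * c') * w k" if k: "k < t" for k
  proof -
    have "v k = inverse c * c' * w k"
      using c(2,3) c'(3) k
      by (metis mult.assoc nonzero_eq_divide_eq divide_inverse_commute mult.commute)
    then show ?thesis using d k by (simp add: mult.assoc)
  qed
  moreover have "d * inverse c * c' \<in> K" using c c' d by (intro mult_in_K inverse_in_K)
  ultimately show "y \<in> K_line w" unfolding K_line_def by blast
qed

definition unit_vec :: "nat \<Rightarrow> nat \<Rightarrow> 'e" where "unit_vec k = (\<lambda>k'. if k' = k then 1 else 0)"

lemma nonzero_unit_vec: "k < t \<Longrightarrow> nonzero_K_vector (unit_vec k)"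
  unfolding nonzero_K_vector_def K_vector_def unit_vec_def using zero_in_K one_in_K by auto

lemma is_spread_desarguesian_spread: "is_spread b desarguesian_spread"
  unfolding is_spread_def
proof (intro conjI ballI impI)
  fix W assume "W \<in> desarguesian_spread"
  then obtain v where "W = K_line v" "nonzero_K_vector v" unfolding desarguesian_spread_def by blast
  then show "vec.subspace W" "vec.dim W = b" using subspace_K_line dim_K_line by auto
next
  fix W W' assume W: "W \<in> desarguesian_spread" "W' \<in> desarguesian_spread" "W \<noteq> W'"
  then obtain v v' where v: "W = K_line v" "W' = K_line v'"
    unfolding desarguesian_spread_def by blast
  show "W \<inter> W' = {0}"
  proof (rule ccontr)
    assume "W \<inter> W' \<noteq> {0}"
    moreover have "0 \<in> W \<inter> W'" using zero_in_K_line v by auto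
    ultimately obtain x where "x \<in> W" "x \<in> W'" "x \<noteq> 0" by blast
    then have "W \<subseteq> W'" "W' \<subseteq> W" using K_line_subset_if_overlap v by blast+
    then show False using W(3) by blast
  qed
next
  show "\<Union> desarguesian_spread = UNIV"
  proof (intro equalityI subsetI)
    fix x :: "'a ^ 'm"
    show "x \<in> \<Union> desarguesian_spread"
    proof (cases "\<exists>k<t. K_coord x k \<noteq> 0")
      case True
      then have "nonzero_K_vector (K_coord x)" unfolding nonzero_K_vector_def K_vector_def
        using K_coord_in_K by blast
      moreover have "x \<in> K_line (K_coord x)" unfolding K_line_def using one_in_K by force
      ultimately show ?thesis unfolding desarguesian_spread_def by blast
    next
      case False
      then have "x = 0" using K_coord_inj[of x 0] by (simp add: K_coord_zero)
      moreover have "nonzero_K_vector (unit_vec 0)" using nonzero_unit_vec t_ge_2 by simp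
      ultimately show ?thesis unfolding desarguesian_spread_def using zero_in_K_line by blast
    qed
  qed simp
qed

lemma K_line_decomposition:
  assumes W: "\<And>k. k < t \<Longrightarrow> K_vector (w k)" and "K_spanning w"
  shows "\<exists>f. x = (\<Sum>k<t. f k) \<and> (\<forall>k<t. f k \<in> K_line (w k))"
proof -
  have "K_vector (K_coord x)" unfolding K_vector_def using K_coord_in_K by blast
  then obtain c where c: "K_vector c" "\<forall>k'<t. K_coord x k' = (\<Sum>k<t. c k * w k k')"
    using \<open>K_spanning w\<close> unfolding K_spanning_def by blast
  define f where "f = (\<lambda>k. SOME z. \<forall>k'<t. K_coord z k' = c k * w k k')"
  have f: "K_coord (f k) k' = c k * w k k'" if "k < t" "k' < t" for k k'
  proof -
    have "\<exists>z. \<forall>k'<t. K_coord z k' = c k * w k k'"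
      by (rule K_coord_surj) (use that c(1) W mult_in_K in \<open>auto simp: K_vector_def\<close>)
    then have "\<forall>k'<t. K_coord (f k) k' = c k * w k k'" unfolding f_def by (rule someI_ex)
    then show ?thesis using that by blast
  qed
  have "\<forall>k<t. f k \<in> K_line (w k)"
    unfolding K_line_def using f c(1) by (auto simp: K_vector_def)
  moreover have "x = (\<Sum>k<t. f k)"
  proof (rule K_coord_inj)
    fix k' assume "k' < t"
    then show "K_coord x k' = K_coord (\<Sum>k<t. f k) k'"
      unfolding K_coord_sum using c(2) f by simp
  qed
  ultimately show ?thesis by blast
qed

lemma K_line_eq_proportional:
  assumes "nonzero_K_vector v" "K_line v = K_line w"
  shows "\<exists>c. \<forall>k<t. v k = c * w k"
proof -
  have "\<exists>x. \<forall>k<t. K_coord x k = v k"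
    using assms(1) K_coord_surj unfolding nonzero_K_vector_def K_vector_def by blast
  then obtain x where x: "\<forall>k<t. K_coord x k = v k" by blast
  then have "x \<in> K_line v" unfolding K_line_def using one_in_K by force
  then have "x \<in> K_line w" using assms by simp
  then show ?thesis unfolding K_line_def using x by auto
qed

lemma sum_unit_vec: "k' < t \<Longrightarrow> (\<Sum>k<t. c k * unit_vec k k') = c k'"
proof -
  assume k': "k' < t"
  have "(\<Sum>k<t. c k * unit_vec k k') = (\<Sum>k<t. if k = k' then c k else 0)"
    by (intro sum.cong) (auto simp: unit_vec_def)
  also have "\<dots> = c k'" using k' by simp
  finally show ?thesis .
qed

(* The standard basis works unless K_line v is a coordinate axis k0; then replace the k0-th basis
   vector by the sum of the k0-th and k1-th ones. *)
lemma spanning_lines_avoiding: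
  assumes "nonzero_K_vector v"
  shows "\<exists>w. (\<forall>k<t. nonzero_K_vector (w k) \<and> K_line (w k) \<noteq> K_line v) \<and> K_spanning w"
proof (cases "\<exists>k0<t. K_line v = K_line (unit_vec k0)")
  case False
  have "\<forall>k<t. nonzero_K_vector (unit_vec k) \<and> K_line (unit_vec k) \<noteq> K_line v"
    using False nonzero_unit_vec by metis
  moreover have "K_spanning unit_vec"
    unfolding K_spanning_def using sum_unit_vec by auto
  ultimately show ?thesis by blast
next
  case True
  then obtain k0 where k0: "k0 < t" "K_line v = K_line (unit_vec k0)" by blast
  define k1 :: nat where "k1 = (if k0 = 0 then 1 else 0)"
  have k1: "k1 < t" "k1 \<noteq> k0" using t_ge_2 k0 by (auto simp: k1_def)
  define w where "w = (\<lambda>k. if k = k0 then (\<lambda>k'. unit_vec k0 k' + unit_vec k1 k') else unit_vec k)"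
  have wK: "K_vector (w k)" for k unfolding w_def K_vector_def unit_vec_def
    using zero_in_K one_in_K add_in_K by auto
  have nz: "nonzero_K_vector (w k)" if "k < t" for k
  proof (cases "k = k0")
    case True
    then have "w k k0 = 1" using k1 by (simp add: w_def unit_vec_def)
    then show ?thesis using wK k0 unfolding nonzero_K_vector_def by force
  next
    case False
    then show ?thesis using nonzero_unit_vec[OF that] by (simp add: w_def)
  qed
  have ne: "K_line (w k) \<noteq> K_line v" if kt: "k < t" for k
  proof
    assume "K_line (w k) = K_line v"
    then have "K_line (w k) = K_line (unit_vec k0)" using k0 by simp
    then obtain c where c: "\<forall>k'<t. w k k' = c * unit_vec k0 k'"
      using K_line_eq_proportional nz[OF kt] by blast
    show False
    proof (cases "k = k0")
      case True
      then have "w k k1 = 1" using k1 by (simp add: w_def unit_vec_def)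
      moreover have "unit_vec k0 k1 = 0" using k1 by (simp add: unit_vec_def)
      ultimately show False using c k1 by force
    next
      case False
      then have "w k k = 1" by (simp add: w_def unit_vec_def)
      moreover have "unit_vec k0 k = 0" using False by (simp add: unit_vec_def)
      ultimately show False using c kt by force
    qed
  qed
  have "\<exists>c. K_vector c \<and> (\<forall>k'<t. y k' = (\<Sum>k<t. c k * w k k'))" if y: "K_vector y" for y
  proof -
    define c where "c = (\<lambda>k. if k = k1 then y k1 - y k0 else y k)"
    have cK: "K_vector c" using y k0 k1 diff_in_K unfolding K_vector_def c_def by auto
    have "y k' = (\<Sum>k<t. c k * w k k')" if k': "k' < t" for k'
    proof -
      have "(\<Sum>k<t. c k * w k k') =
          (\<Sum>k<t. c k * unit_vec k k' + (if k = k0 then c k * unit_vec k1 k' else 0))"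
        by (intro sum.cong) (auto simp: w_def algebra_simps)
      also have "\<dots> = c k' + c k0 * unit_vec k1 k'"
        using k0 k' by (simp add: sum.distrib sum_unit_vec)
      also have "\<dots> = y k'" using k1 by (auto simp: c_def unit_vec_def)
      finally show ?thesis by simp
    qed
    then show ?thesis using cK by blast
  qed
  then have "K_spanning w" unfolding K_spanning_def by blast
  then show ?thesis using nz ne by blast
qed

lemma column_recovery_set_desarguesian_spread:
  assumes code: "array_code_of n b desarguesian_spread V g" and j: "j < n"
  shows "\<exists>R. R \<subseteq> {..<n} - {j} \<and> card R \<le> t \<and> column_recoverable b g R j"
proof -
  interpret spread_code b desarguesian_spread n V g
    using is_spread_desarguesian_spread code by unfold_locales
  obtain v where v: "V j = K_line v" "nonzero_K_vector v"
    using column_space_in_spread[OF j] unfolding desarguesian_spread_def by blast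
  obtain w where w: "\<forall>k<t. nonzero_K_vector (w k) \<and> K_line (w k) \<noteq> K_line v" "K_spanning w"
    using spanning_lines_avoiding[OF v(2)] by blast
  have "\<forall>k\<in>{..<t}. \<exists>r. r < n \<and> V r = K_line (w k)"
    using spread_member_is_column_space w unfolding desarguesian_spread_def by blast
  then obtain r where r: "\<forall>k\<in>{..<t}. r k < n \<and> V (r k) = K_line (w k)" by metis
  let ?R = "r ` {..<t}"
  have R: "?R \<subseteq> {..<n} - {j}" using r w v by fastforce
  have "column_recoverable b g ?R j"
    unfolding column_recoverable_iff
  proof (intro allI impI)
    fix i assume "i < b"
    obtain f where f: "g j i = (\<Sum>k<t. f k)" "\<forall>k<t. f k \<in> K_line (w k)"
      using K_line_decomposition[of w "g j i"] w unfolding nonzero_K_vector_def by blast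
    have "f k \<in> recovery_span b g ?R" if "k \<in> {..<t}" for k
    proof -
      have "f k \<in> V (r k)" using f r that by auto
      moreover have "V (r k) \<subseteq> recovery_span b g ?R"
        using R that by (intro column_space_subset_recovery_span) auto
      ultimately show ?thesis by blast
    qed
    then show "g j i \<in> recovery_span b g ?R"
      unfolding f(1) by (intro vec.subspace_sum[OF subspace_recovery_span])
  qed
  moreover have "card ?R \<le> t" using card_image_le[of "{..<t}" r] by simp
  ultimately show ?thesis using R by blast
qed

lemma node_locality_desarguesian_spread:
  assumes "array_code_of n b desarguesian_spread V g"
  shows "node_locality n b g \<le> t"
  unfolding node_locality_def
  using column_recovery_set_desarguesian_spread[OF assms] by (intro Least_le) blast

end

lemma exists_spread_with_node_locality_le:
  fixes b :: nat
  assumes "b dvd CARD('m::finite)" and "b < CARD('m)"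
  shows "\<exists>S :: ('a::{finite,field} ^ 'm) set set. is_spread b S \<and>
           (\<forall>n V g. array_code_of n b S V g \<longrightarrow> node_locality n b g \<le> CARD('m) div b)"
proof -
  have "0 < b" using assms(1) by (cases b) auto
  define t where "t = CARD('m) div b"
  have "CARD('m) = b * t" using assms(1) by (simp add: t_def)
  then have "2 \<le> t" using assms(2) by (cases t) (auto simp: less_2_cases_iff)
  obtain K :: "'a alg_closure set" and \<beta> where "is_subfield K" "range to_ac \<subseteq> K"
      "\<forall>i<b. \<beta> i \<in> K" "bij_betw (lin_comb \<beta> b) (coord_vectors b (range to_ac)) K"
    using subfield_of_degree_over_finite_field[OF \<open>0 < b\<close>] by metis
  moreover have "card (UNIV :: 'm set) = card ({..<b} \<times> {..<t})"
    using \<open>CARD('m) = b * t\<close> by (simp add: card_cartesian_product)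
  then obtain e :: "'m \<Rightarrow> nat \<times> nat" where "bij_betw e UNIV ({..<b} \<times> {..<t})"
    using finite_same_card_bij[of "UNIV :: 'm set" "{..<b} \<times> {..<t}"] by auto
  ultimately interpret extension_coordinates to_ac K \<beta> b t e
    using \<open>2 \<le> t\<close> inj_to_ac by unfold_locales auto
  show ?thesis
    using is_spread_desarguesian_spread node_locality_desarguesian_spread unfolding t_def by blast
qed

theorem mainTheorem8:
  fixes b :: nat
  assumes "b dvd CARD('m::finite)" and "b < CARD('m)"
  shows "(\<forall>(S :: ('a::{finite,field} ^ 'm) set set) n V g.
            is_spread b S \<and> array_code_of n b S V g \<longrightarrow>
              symbol_locality n b g = 2 \<and>
              2 \<le> node_locality n b g \<and> node_locality n b g \<le> b + 1)
       \<and> (\<exists>S :: ('a ^ 'm) set set. is_spread b S \<and>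
            (\<forall>n V g. array_code_of n b S V g \<longrightarrow>
               node_locality n b g \<le> CARD('m) div b))"
proof -
  have "0 < b" using assms(1) by (cases b) auto
  have "symbol_locality n b g = 2 \<and> 2 \<le> node_locality n b g \<and> node_locality n b g \<le> b + 1"
    if "is_spread b S" "array_code_of n b S V g" for S :: "('a ^ 'm) set set" and n V g
    using spread_code.localities[OF spread_code.intro[OF that] \<open>0 < b\<close> assms(2)] by simp
  then show ?thesis using exists_spread_with_node_locality_le[OF assms] by blast
qed

end
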